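(* Let $G$ and $H$ be trees, let $\omega:(V(G)\times V(H))\cup(E(G)\times E(H))\to\mathbb{R}\cup\{-\infty\}$ be a weight function, and let $r\in V(G)$ be arbitrary. Then $\mathrm{MCS}_{\mathrm{fast}}(G^r,H)=\mathrm{MCS}(G,H)$, where $\mathrm{MCS}_{\mathrm{fast}}(G^r,H):=\max\{\mathrm{MCS}_{\mathrm{root}}(G^r_u,H^{s})\mid u\in V(G),\ s\in V(H)\}$ and $\mathrm{MCS}(G,H):=\max\{\mathrm{MCS}_{\mathrm{root}}(G^{r'},H^{s})\mid r'\in V(G),\ s\in V(H)\}$.
   Context: All graphs are simple and undirected; a tree is a connected graph with a unique path between any two vertices. An isomorphism between graphs $A,B$ is a bijection $\phi:V(A)\to V(B)$ with $uv\in E(A)\Leftrightarrow\phi(u)\phi(v)\in E(B)$. For a tree $G$ and $r\in V(G)$, $G^r$ denotes $G$ rooted at $r$; for $u\in V(G)$, the rooted subtree $G^r_u$ is the subtree of $G$ induced by $u$ and all its descendants in $G^r$, rooted at $u$. A common subtree isomorphism between trees $A$ and $B$ is an isomorphism $\varphi$ between induced subgraphs $A[X]$ and $B[Y]$ that are trees; $\operatorname{dom}(\varphi)=X$. Its weight is $W(\varphi)=\sum_{v\in X}\omega(v,\varphi(v))+\sum_{uv\in E(A[X])}\omega(uv,\varphi(u)\varphi(v))$. For rooted trees $A^a$ and $B^b$ (here subtrees of $G$ and $H$, so $\omega$ applies), $\mathrm{MCS}_{\mathrm{root}}(A^a,B^b)$ is the maximum weight of a common subtree isomorphism $\varphi$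 between $A$ and $B$ with $a\in\operatorname{dom}(\varphi)$ and $\varphi(a)=b$. Equivalently, $\mathrm{MCS}_{\mathrm{root}}(A^a,B^b)=\omega(a,b)+W(M)$, where $M$ is a maximum weight matching (possibly empty) of the complete bipartite graph on the children $C(a)$ of $a$ and $C(b)$ of $b$ with edge weights $\omega(aa',bb')+\mathrm{MCS}_{\mathrm{root}}(A^a_{a'},B^b_{b'})$. *)

theory Defs
  imports Main "HOL-Library.Extended_Real"
begin

definition is_path :: "'a set \<Rightarrow> 'a set set \<Rightarrow> 'a list \<Rightarrow> bool" where
  "is_path V E xs \<longleftrightarrow> xs \<noteq> [] \<and> distinct xs \<and> set xs \<subseteq> V \<and>
     (\<forall>i < length xs - 1. {xs ! i, xs ! Suc i} \<in> E)"

definition simple_graph :: "'a set \<Rightarrow> 'a set set \<Rightarrow> bool" where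
  "simple_graph V E \<longleftrightarrow> finite V \<and> E \<subseteq> {{u, v} | u v. u \<in> V \<and> v \<in> V \<and> u \<noteq> v}"

definition tree :: "'a set \<Rightarrow> 'a set set \<Rightarrow> bool" where
  "tree V E \<longleftrightarrow> simple_graph V E \<and> V \<noteq> {} \<and>
     (\<forall>u\<in>V. \<forall>v\<in>V. \<exists>!xs. is_path V E xs \<and> hd xs = u \<and> last xs = v)"

definition induced :: "'a set set \<Rightarrow> 'a set \<Rightarrow> 'a set set" where
  "induced E X = {e \<in> E. e \<subseteq> X}"

definition tree_path :: "'a set \<Rightarrow> 'a set set \<Rightarrow> 'a \<Rightarrow> 'a \<Rightarrow> 'a list" where
  "tree_path V E r w = (THE xs. is_path V E xs \<and> hd xs = r \<and> last xs = w)"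

text \<open>Vertex set of the rooted subtree G^r_u: u and all its descendants in G^r.\<close>
definition descendants :: "'a set \<Rightarrow> 'a set set \<Rightarrow> 'a \<Rightarrow> 'a \<Rightarrow> 'a set" where
  "descendants V E r u = {w \<in> V. u \<in> set (tree_path V E r w)}"

text \<open>phi restricted to X is a common subtree isomorphism between (VA,EA) and (VB,EB),
  with dom(phi) = X.\<close>
definition common_subtree_iso ::
  "'a set \<Rightarrow> 'a set set \<Rightarrow> 'b set \<Rightarrow> 'b set set \<Rightarrow> ('a \<Rightarrow> 'b) \<Rightarrow> 'a set \<Rightarrow> bool" where
  "common_subtree_iso VA EA VB EB \<phi> X \<longleftrightarrow>
     X \<subseteq> VA \<and> \<phi> ` X \<subseteq> VB \<and> inj_on \<phi> X \<and>
     tree X (induced EA X) \<and> tree (\<phi> ` X) (induced EB (\<phi> ` X)) \<and>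
     (\<forall>u\<in>X. \<forall>v\<in>X. {u, v} \<in> EA \<longleftrightarrow> {\<phi> u, \<phi> v} \<in> EB)"

definition iso_weight ::
  "('a \<Rightarrow> 'b \<Rightarrow> ereal) \<Rightarrow> ('a set \<Rightarrow> 'b set \<Rightarrow> ereal) \<Rightarrow> 'a set set \<Rightarrow> ('a \<Rightarrow> 'b) \<Rightarrow> 'a set \<Rightarrow> ereal" where
  "iso_weight \<omega>V \<omega>E EA \<phi> X =
     (\<Sum>v\<in>X. \<omega>V v (\<phi> v)) + (\<Sum>e\<in>induced EA X. \<omega>E e (\<phi> ` e))"

text \<open>MCS_root(A^a, B^b): maximum weight of a common subtree isomorphism mapping a to b.
  (The maximum is attained, so it coincides with the supremum used here.)\<close>
definition mcs_root ::
  "('a \<Rightarrow> 'b \<Rightarrow> ereal) \<Rightarrow> ('a set \<Rightarrow> 'b set \<Rightarrow> ereal) \<Rightarrow>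
   'a set \<Rightarrow> 'a set set \<Rightarrow> 'a \<Rightarrow> 'b set \<Rightarrow> 'b set set \<Rightarrow> 'b \<Rightarrow> ereal" where
  "mcs_root \<omega>V \<omega>E VA EA a VB EB b =
     Sup {iso_weight \<omega>V \<omega>E EA \<phi> X | \<phi> X.
            common_subtree_iso VA EA VB EB \<phi> X \<and> a \<in> X \<and> \<phi> a = b}"

definition mcs_fast ::
  "('a \<Rightarrow> 'b \<Rightarrow> ereal) \<Rightarrow> ('a set \<Rightarrow> 'b set \<Rightarrow> ereal) \<Rightarrow>
   'a set \<Rightarrow> 'a set set \<Rightarrow> 'a \<Rightarrow> 'b set \<Rightarrow> 'b set set \<Rightarrow> ereal" where
  "mcs_fast \<omega>V \<omega>E VG EG r VH EH =
     Max {mcs_root \<omega>V \<omega>E (descendants VG EG r u) (induced EG (descendants VG EG r u)) u VH EH s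
          | u s. u \<in> VG \<and> s \<in> VH}"

definition mcs ::
  "('a \<Rightarrow> 'b \<Rightarrow> ereal) \<Rightarrow> ('a set \<Rightarrow> 'b set \<Rightarrow> ereal) \<Rightarrow>
   'a set \<Rightarrow> 'a set set \<Rightarrow> 'b set \<Rightarrow> 'b set set \<Rightarrow> ereal" where
  "mcs \<omega>V \<omega>E VG EG VH EH =
     Max {mcs_root \<omega>V \<omega>E VG EG r' VH EH s | r' s. r' \<in> VG \<and> s \<in> VH}"

end

theory Submission
  imports Defs
begin

text \<open>Both sides equal the supremum of the weights of all common subtree isomorphisms
  between G and H. For MCS this holds because every such isomorphism maps some vertex r' to
  some s. For MCS_fast, an isomorphism whose domain lies in G^r_u is one of G, and conversely
  the domain X of every isomorphism lies in G^r_u for its vertex u closest to r: along a path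
  in X starting at u, the tree path from r to the current vertex keeps containing u, since
  stepping from u to its parent would reach a vertex of X closer to r.\<close>

lemma tree_nonempty: "tree V E \<Longrightarrow> V \<noteq> {}"
  by (simp add: tree_def)

lemma is_path_unique:
  assumes "tree V E" "is_path V E xs" "is_path V E ys" "hd xs = hd ys" "last xs = last ys"
  shows "xs = ys"
proof -
  have "hd xs \<in> V" "last xs \<in> V"
    using assms(2) unfolding is_path_def by auto
  with assms(1) have "\<exists>!zs. is_path V E zs \<and> hd zs = hd xs \<and> last zs = last xs"
    unfolding tree_def by blast
  with assms show ?thesis by metis
qed

lemma tree_path:
  assumes "tree V E" "r \<in> V" "w \<in> V"
  shows "is_path V E (tree_path V E r w)" "hd (tree_path V E r w) = r" "last (tree_path V E r w) = w"
proof -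
  from assms have "\<exists>!xs. is_path V E xs \<and> hd xs = r \<and> last xs = w"
    unfolding tree_def by blast
  then have "is_path V E (tree_path V E r w) \<and> hd (tree_path V E r w) = r \<and> last (tree_path V E r w) = w"
    unfolding tree_path_def by (rule theI')
  then show "is_path V E (tree_path V E r w)" "hd (tree_path V E r w) = r" "last (tree_path V E r w) = w"
    by auto
qed

lemma tree_path_eqI:
  assumes "tree V E" "is_path V E xs" "hd xs = r" "last xs = w"
  shows "tree_path V E r w = xs"
proof -
  have "r \<in> V" "w \<in> V" using assms(2-4) unfolding is_path_def by auto
  with assms show ?thesis using tree_path is_path_unique by metis
qed

lemma is_path_take:
  assumes "is_path V E xs" "k < length xs"
  shows "is_path V E (take (Suc k) xs)"
  using assms unfolding is_path_def by (auto dest: in_set_takeD)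

lemma is_path_drop:
  assumes "is_path V E xs" "k < length xs"
  shows "is_path V E (drop k xs)"
  using assms unfolding is_path_def by (auto dest: in_set_dropD simp: add.commute)

lemma is_path_snoc:
  assumes "is_path V E xs" "b \<in> V" "b \<notin> set xs" "{last xs, b} \<in> E"
  shows "is_path V E (xs @ [b])"
  unfolding is_path_def
proof (intro conjI allI impI)
  fix i assume i: "i < length (xs @ [b]) - 1"
  have "xs \<noteq> []" using assms(1) unfolding is_path_def by auto
  show "{(xs @ [b]) ! i, (xs @ [b]) ! Suc i} \<in> E"
  proof (cases "Suc i < length xs")
    case True
    then show ?thesis using assms(1) by (auto simp: is_path_def nth_append)
  next
    case False
    with i have "i = length xs - 1" by simp
    then show ?thesis using assms(4) \<open>xs \<noteq> []\<close> by (simp add: nth_append last_conv_nth)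
  qed
qed (use assms in \<open>auto simp: is_path_def\<close>)

lemma is_path_edge:
  assumes "{a, b} \<in> E" "a \<in> V" "b \<in> V" "a \<noteq> b"
  shows "is_path V E [a, b]"
  using assms by (auto simp: is_path_def)

lemma tree_path_edge:
  assumes T: "tree V E" and r: "r \<in> V" and e: "{a, b} \<in> E"
  shows "tree_path V E r b = tree_path V E r a @ [b] \<or> tree_path V E r a = tree_path V E r b @ [a]"
proof -
  have ab: "a \<in> V" "b \<in> V" "a \<noteq> b"
    using T e unfolding tree_def simple_graph_def by (auto simp: doubleton_eq_iff)
  define p where "p = tree_path V E r a"
  have p: "is_path V E p" "hd p = r" "last p = a"
    using tree_path[OF T r ab(1)] unfolding p_def by auto
  show ?thesis
  proof (cases "b \<in> set p")
    case False
    have "is_path V E (p @ [b])"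
      using is_path_snoc[OF p(1) ab(2) False] p(3) e by simp
    moreover have "hd (p @ [b]) = r" using p unfolding is_path_def by auto
    ultimately have "tree_path V E r b = p @ [b]"
      using tree_path_eqI[OF T] by (metis last_snoc)
    then show ?thesis unfolding p_def by simp
  next
    case True
    then obtain k where k: "k < length p" "p ! k = b" by (auto simp: in_set_conv_nth)
    have "hd (take (Suc k) p) = r" using p k unfolding is_path_def by auto
    moreover have "last (take (Suc k) p) = b" using k by (simp add: take_Suc_conv_app_nth)
    ultimately have path_b: "tree_path V E r b = take k p @ [b]"
      using tree_path_eqI[OF T is_path_take[OF p(1) k(1)]] k by (simp add: take_Suc_conv_app_nth)
    have "hd (drop k p) = b" "last (drop k p) = a" using k p(3) by (simp_all add: hd_drop_conv_nth)
    then have "drop k p = [b, a]"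
      using is_path_unique[OF T is_path_drop[OF p(1) k(1)] is_path_edge[of b a E V]] e ab
      by (auto simp: insert_commute)
    then have "p = take k p @ [b, a]" by (metis append_take_drop_id)
    with path_b show ?thesis unfolding p_def by auto
  qed
qed

lemma tree_path_edge_mem:
  assumes "tree V E" "r \<in> V" "{a, b} \<in> E" "u \<in> set (tree_path V E r a)"
  shows "u \<in> set (tree_path V E r b) \<or> u = a \<and> length (tree_path V E r b) < length (tree_path V E r a)"
  using tree_path_edge[OF assms(1-3)] assms(4) by auto

lemma subtree_in_descendants:
  assumes T: "tree V E" and r: "r \<in> V" and X: "X \<subseteq> V" "tree X (induced E X)"
  obtains u where "u \<in> X" "X \<subseteq> descendants V E r u"
proof -
  let ?depth = "\<lambda>w. length (tree_path V E r w)"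
  obtain x where "x \<in> X" using tree_nonempty[OF X(2)] by blast
  then obtain u where u: "u \<in> X" and closest: "\<And>w. w \<in> X \<Longrightarrow> ?depth u \<le> ?depth w"
    using ex_has_least_nat[of "\<lambda>x. x \<in> X" x ?depth] by blast
  have "w \<in> descendants V E r u" if w: "w \<in> X" for w
  proof -
    obtain xs where xs: "is_path X (induced E X) xs" "hd xs = u" "last xs = w"
      using X(2) u w unfolding tree_def by blast
    have xs_ne: "xs \<noteq> []" and xs_X: "set xs \<subseteq> X" using xs(1) unfolding is_path_def by auto
    have "u \<in> set (tree_path V E r (xs ! i))" if "i < length xs" for i
      using that
    proof (induction i)
      case 0
      have "last (tree_path V E r u) = u" "tree_path V E r u \<noteq> []"
        using tree_path[OF T r] u X(1) unfolding is_path_def by auto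
      then show ?case using xs(2) xs_ne by (metis hd_conv_nth last_in_set)
    next
      case (Suc i)
      have "{xs ! i, xs ! Suc i} \<in> E"
        using xs(1) Suc.prems unfolding is_path_def induced_def by auto
      moreover have "?depth u \<le> ?depth (xs ! Suc i)"
        using closest xs_X Suc.prems by (meson nth_mem subsetD)
      moreover have "u \<in> set (tree_path V E r (xs ! i))"
        using Suc by simp
      ultimately show ?case
        using tree_path_edge_mem[OF T r] by fastforce
    qed
    from this[of "length xs - 1"] xs_ne xs(3) have "u \<in> set (tree_path V E r w)"
      by (simp add: last_conv_nth)
    with w X(1) show ?thesis unfolding descendants_def by auto
  qed
  with u that show ?thesis by blast
qed

lemma induced_induced: "X \<subseteq> D \<Longrightarrow> induced (induced E D) X = induced E X"
  unfolding induced_def by auto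

lemma common_subtree_iso_induced_iff:
  assumes "D \<subseteq> VA"
  shows "common_subtree_iso D (induced EA D) VB EB \<phi> X \<longleftrightarrow>
    common_subtree_iso VA EA VB EB \<phi> X \<and> X \<subseteq> D"
proof (cases "X \<subseteq> D")
  case True
  then have "\<forall>u\<in>X. \<forall>v\<in>X. {u, v} \<in> induced EA D \<longleftrightarrow> {u, v} \<in> EA"
    by (auto simp: induced_def)
  with True assms show ?thesis
    unfolding common_subtree_iso_def induced_induced[OF True] by blast
qed (auto simp: common_subtree_iso_def)

lemma iso_weight_induced:
  "X \<subseteq> D \<Longrightarrow> iso_weight \<omega>V \<omega>E (induced EA D) \<phi> X = iso_weight \<omega>V \<omega>E EA \<phi> X"
  unfolding iso_weight_def by (simp add: induced_induced)

lemma Max_Sup_family: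
  fixes S :: "'i \<Rightarrow> 'j \<Rightarrow> 'c::complete_linorder set"
  assumes "finite I" "finite J" "I \<noteq> {}" "J \<noteq> {}"
  shows "Max {Sup (S i j) | i j. i \<in> I \<and> j \<in> J} = Sup (\<Union>i\<in>I. \<Union>j\<in>J. S i j)"
proof -
  have "{Sup (S i j) | i j. i \<in> I \<and> j \<in> J} = (\<lambda>(i, j). Sup (S i j)) ` (I \<times> J)"
    by auto
  moreover have "(\<Union>i\<in>I. \<Union>j\<in>J. S i j) = (\<Union>(i, j)\<in>I \<times> J. S i j)"
    by auto
  ultimately show ?thesis
    using assms by (simp add: cSup_eq_Max[symmetric] SUP_UNION[of id, simplified] case_prod_beta)
qed

lemma mcs_eq_Sup_iso_weight:
  assumes "tree VG EG" "tree VH EH"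
  shows "mcs \<omega>V \<omega>E VG EG VH EH =
    Sup {iso_weight \<omega>V \<omega>E EG \<phi> X | \<phi> X. common_subtree_iso VG EG VH EH \<phi> X}"
proof -
  have fin: "finite VG" "finite VH" "VG \<noteq> {}" "VH \<noteq> {}"
    using assms unfolding tree_def simple_graph_def by auto
  have "(\<Union>r'\<in>VG. \<Union>s\<in>VH. {iso_weight \<omega>V \<omega>E EG \<phi> X | \<phi> X.
          common_subtree_iso VG EG VH EH \<phi> X \<and> r' \<in> X \<and> \<phi> r' = s}) =
        {iso_weight \<omega>V \<omega>E EG \<phi> X | \<phi> X. common_subtree_iso VG EG VH EH \<phi> X}"
  proof (intro equalityI subsetI)
    fix w assume "w \<in> (\<Union>r'\<in>VG. \<Union>s\<in>VH. {iso_weight \<omega>V \<omega>E EG \<phi> X | \<phi> X.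
          common_subtree_iso VG EG VH EH \<phi> X \<and> r' \<in> X \<and> \<phi> r' = s})"
    then show "w \<in> {iso_weight \<omega>V \<omega>E EG \<phi> X | \<phi> X. common_subtree_iso VG EG VH EH \<phi> X}"
      by auto
  next
    fix w assume "w \<in> {iso_weight \<omega>V \<omega>E EG \<phi> X | \<phi> X. common_subtree_iso VG EG VH EH \<phi> X}"
    then obtain \<phi> X where iso: "common_subtree_iso VG EG VH EH \<phi> X"
      and w: "w = iso_weight \<omega>V \<omega>E EG \<phi> X" by blast
    have "X \<subseteq> VG" "\<phi> ` X \<subseteq> VH" "tree X (induced EG X)"
      using iso by (simp_all add: common_subtree_iso_def)
    moreover obtain x where x: "x \<in> X" using tree_nonempty[OF \<open>tree X (induced EG X)\<close>] by blast
    ultimately have "x \<in> VG" "\<phi> x \<in> VH" by auto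
    with iso w x show "w \<in> (\<Union>r'\<in>VG. \<Union>s\<in>VH. {iso_weight \<omega>V \<omega>E EG \<phi> X | \<phi> X.
          common_subtree_iso VG EG VH EH \<phi> X \<and> r' \<in> X \<and> \<phi> r' = s})"
      by blast
  qed
  then show ?thesis
    unfolding mcs_def mcs_root_def Max_Sup_family[OF fin] by (rule arg_cong)
qed

lemma descendants_subset: "descendants V E r u \<subseteq> V"
  unfolding descendants_def by auto

lemma mcs_fast_eq_Sup_iso_weight:
  assumes G: "tree VG EG" and H: "tree VH EH" and r: "r \<in> VG"
  shows "mcs_fast \<omega>V \<omega>E VG EG r VH EH =
    Sup {iso_weight \<omega>V \<omega>E EG \<phi> X | \<phi> X. common_subtree_iso VG EG VH EH \<phi> X}"
proof -
  let ?D = "descendants VG EG r"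
  have fin: "finite VG" "finite VH" "VG \<noteq> {}" "VH \<noteq> {}"
    using G H unfolding tree_def simple_graph_def by auto
  have "(\<Union>u\<in>VG. \<Union>s\<in>VH. {iso_weight \<omega>V \<omega>E (induced EG (?D u)) \<phi> X | \<phi> X.
          common_subtree_iso (?D u) (induced EG (?D u)) VH EH \<phi> X \<and> u \<in> X \<and> \<phi> u = s}) =
        {iso_weight \<omega>V \<omega>E EG \<phi> X | \<phi> X. common_subtree_iso VG EG VH EH \<phi> X}"
  proof (intro equalityI subsetI)
    fix w assume "w \<in> (\<Union>u\<in>VG. \<Union>s\<in>VH. {iso_weight \<omega>V \<omega>E (induced EG (?D u)) \<phi> X | \<phi> X.
          common_subtree_iso (?D u) (induced EG (?D u)) VH EH \<phi> X \<and> u \<in> X \<and> \<phi> u = s})"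
    then obtain u \<phi> X where iso: "common_subtree_iso (?D u) (induced EG (?D u)) VH EH \<phi> X"
      and w: "w = iso_weight \<omega>V \<omega>E (induced EG (?D u)) \<phi> X" by blast
    then have "common_subtree_iso VG EG VH EH \<phi> X" "X \<subseteq> ?D u"
      by (simp_all add: common_subtree_iso_induced_iff[OF descendants_subset])
    with w show "w \<in> {iso_weight \<omega>V \<omega>E EG \<phi> X | \<phi> X. common_subtree_iso VG EG VH EH \<phi> X}"
      by (auto simp: iso_weight_induced)
  next
    fix w assume "w \<in> {iso_weight \<omega>V \<omega>E EG \<phi> X | \<phi> X. common_subtree_iso VG EG VH EH \<phi> X}"
    then obtain \<phi> X where iso: "common_subtree_iso VG EG VH EH \<phi> X"
      and w: "w = iso_weight \<omega>V \<omega>E EG \<phi> X" by blast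
    have X: "X \<subseteq> VG" "\<phi> ` X \<subseteq> VH" "tree X (induced EG X)"
      using iso by (simp_all add: common_subtree_iso_def)
    obtain u where u: "u \<in> X" "X \<subseteq> ?D u"
      using subtree_in_descendants[OF G r X(1,3)] by blast
    have "common_subtree_iso (?D u) (induced EG (?D u)) VH EH \<phi> X"
      using iso u(2) by (simp add: common_subtree_iso_induced_iff[OF descendants_subset])
    moreover have "w = iso_weight \<omega>V \<omega>E (induced EG (?D u)) \<phi> X"
      using w u(2) by (simp add: iso_weight_induced)
    moreover have "u \<in> VG" "\<phi> u \<in> VH" using u(1) X by auto
    ultimately show "w \<in> (\<Union>u\<in>VG. \<Union>s\<in>VH. {iso_weight \<omega>V \<omega>E (induced EG (?D u)) \<phi> X | \<phi> X.
          common_subtree_iso (?D u) (induced EG (?D u)) VH EH \<phi> X \<and> u \<in> X \<and> \<phi> u = s})"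
      using u(1) by blast
  qed
  then show ?thesis
    unfolding mcs_fast_def mcs_root_def Max_Sup_family[OF fin] by (rule arg_cong)
qed

theorem lemma2:
  fixes VG :: "'a set" and EG :: "'a set set" and VH :: "'b set" and EH :: "'b set set"
    and \<omega>V :: "'a \<Rightarrow> 'b \<Rightarrow> ereal" and \<omega>E :: "'a set \<Rightarrow> 'b set \<Rightarrow> ereal"
  assumes "tree VG EG" and "tree VH EH"
    and "\<And>u v. \<omega>V u v \<noteq> \<infinity>" and "\<And>e f. \<omega>E e f \<noteq> \<infinity>"
    and "r \<in> VG"
  shows "mcs_fast \<omega>V \<omega>E VG EG r VH EH = mcs \<omega>V \<omega>E VG EG VH EH"
  using mcs_fast_eq_Sup_iso_weight[OF assms(1,2,5)] mcs_eq_Sup_iso_weight[OF assms(1,2)] by simp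

end
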